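(* For integers $q\ge1$, $a$, $n$ let $S(q,a,n)=\sum_{x=1}^q e\big(\frac{ax^2+nx}{q}\big)$, and for integers $n_1,n_2,n_3,m$ let $$T(q;n_1,n_2,n_3,m)=\sum_{\substack{a=1\\ (a,q)=1}}^q S(q,a,n_1)S(q,a,n_2)S(q,a,n_3)\,e\Big(\frac{\overline{a}\,m}{q}\Big),$$ where $\overline{a}$ is the inverse of $a$ modulo $q$. Suppose that $q=q_1q_2$ with $(q_1,q_2)=1$, $q_1$ square-free and $q_2$ square-full. Then for all integers $n_1,n_2,n_3,m$, $$|T(q;n_1,n_2,n_3,m)|\le 4q_1^2q_2^{5/2}.$$
   Context: $e(z)=e^{2\pi i z}$. A positive integer $q_2$ is square-full if $p\mid q_2$ implies $p^2\mid q_2$ for every prime $p$ (in particular $q_2=1$ is allowed). *)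

theory Defs
  imports "HOL-Analysis.Analysis" "HOL-Number_Theory.Number_Theory" "HOL-Computational_Algebra.Squarefree"
begin

definition e :: "real \<Rightarrow> complex" where
  "e z = exp (2 * pi * \<i> * complex_of_real z)"

definition squarefull :: "nat \<Rightarrow> bool" where
  "squarefull n \<longleftrightarrow> (\<forall>p. prime p \<and> p dvd n \<longrightarrow> p^2 dvd n)"

(* an inverse of a modulo q (any representative; e(abar*m/q) does not depend on the choice) *)
definition inv_mod :: "int \<Rightarrow> int \<Rightarrow> int" where
  "inv_mod q a = (SOME b. [a * b = 1] (mod q))"

definition S :: "int \<Rightarrow> int \<Rightarrow> int \<Rightarrow> complex" where
  "S q a n = (\<Sum>x\<in>{1..q}. e (real_of_int (a * x^2 + n * x) / real_of_int q))"

definition T :: "int \<Rightarrow> int \<Rightarrow> int \<Rightarrow> int \<Rightarrow> int \<Rightarrow> complex" where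
  "T q n1 n2 n3 m = (\<Sum>a\<in>{a\<in>{1..q}. coprime a q}.
      S q a n1 * S q a n2 * S q a n3 * e (real_of_int (inv_mod q a * m) / real_of_int q))"

end

theory Submission
  imports Defs
begin

text \<open>
  By the Chinese remainder theorem, \<open>T\<close> modulo \<open>q\<^sub>1 q\<^sub>2\<close> factors into sums of the same shape modulo
  \<open>q\<^sub>1\<close> and \<open>q\<^sub>2\<close> whose quadratic coefficients \<open>a\<close> are twisted to \<open>c a\<close> by a unit \<open>c\<close> (a Bezout
  coefficient); iterating, the factor for the square-free \<open>q\<^sub>1\<close> splits over its prime divisors.
  Expanding \<open>|S(q,a,n)|\<^sup>2\<close> as a double sum gives \<open>|S|\<^sup>2 \<le> 2q\<close>, and \<open>|S|\<^sup>2 = q\<close> for odd \<open>q\<close>; this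
  bounds the factor for \<open>q\<^sub>2\<close> trivially by \<open>2\<surd>2 q\<^sub>2 ^ (5/2)\<close> (by \<open>q\<^sub>2 ^ (5/2)\<close> if \<open>q\<^sub>2\<close> is odd) and the
  factor for the prime 2 by 8. For an odd prime \<open>p\<close>, completing the square writes
  \<open>S(p,ca,n) = e(-(4ca)\<inverse>n\<^sup>2/p) (ca/p) G\<close> (inverses modulo \<open>p\<close>) with the Gauss sum \<open>|G| = \<surd>p\<close>,
  so \<open>T = \<plusminus>G\<^sup>3 \<Sum>\<^sub>a (a/p) e(a\<inverse>d/p)\<close>; substituting \<open>a \<mapsto> a\<inverse>\<close> turns the last sum into a
  Legendre-twisted linear sum of modulus at most \<open>\<surd>p\<close>, whence \<open>|T| \<le> p\<^sup>2\<close>. As \<open>q\<^sub>1\<close> and \<open>q\<^sub>2\<close> are not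
  both even, the constants \<open>2\<close> and \<open>2\<surd>2\<close> never meet, and the total constant is at most 4.
\<close>

lemma e_add: "e (x + y) = e x * e y"
  unfolding e_def by (simp add: distrib_left exp_add)

lemma e_of_int [simp]: "e (of_int k) = 1"
proof -
  have "2 * complex_of_real pi * \<i> * complex_of_real (of_int k) = 2 * pi * \<i> * of_int k"
    by simp
  then show ?thesis
    unfolding e_def by (simp add: exp_eq_1)
qed

lemma e_zero [simp]: "e 0 = 1"
  unfolding e_def by simp

lemma norm_e [simp]: "norm (e x) = 1"
  unfolding e_def by (simp add: norm_exp_eq_Re)

lemma cnj_e: "cnj (e x) = e (- x)"
  unfolding e_def by (simp add: exp_cnj)

lemma e_frac_cong:
  assumes "q \<noteq> 0" "[x = y] (mod q)"
  shows "e (of_int x / of_int q) = e (of_int y / of_int q)"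
proof -
  obtain k where "x = y + q * k"
    using assms(2) unfolding cong_iff_dvd_diff dvd_def by (metis add.commute diff_add_cancel)
  then have "of_int x / of_int q = of_int y / of_int q + (of_int k :: real)"
    using assms(1) by (simp add: add_divide_distrib)
  then show ?thesis
    by (simp add: e_add)
qed

lemma e_frac_eq_1_iff:
  assumes "q > 0"
  shows "e (of_int k / of_int q) = 1 \<longleftrightarrow> q dvd k"
proof
  assume "e (of_int k / of_int q) = 1"
  then obtain n :: int where "2 * pi * (of_int k / of_int q) = of_int (2 * n) * pi"
    unfolding e_def exp_eq_1 by auto
  then have "(of_int k / of_int q) * (2 * pi) = (of_int n :: real) * (2 * pi)"
    by (simp add: algebra_simps)
  moreover have "2 * pi \<noteq> 0"
    by simp
  ultimately have "of_int k / of_int q = (of_int n :: real)"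
    using mult_right_cancel by blast
  then have "k = q * n"
    using assms by (simp add: field_simps flip: of_int_mult)
  then show "q dvd k" by simp
qed (use assms in \<open>auto simp: dvd_def\<close>)

lemma e_frac_mult_split:
  assumes "q1 \<noteq> 0" "q2 \<noteq> 0" and "r1 * q2 + r2 * q1 = 1"
  shows "e (of_int k / of_int (q1 * q2))
       = e (of_int (r1 * k) / of_int q1) * e (of_int (r2 * k) / of_int q2)"
proof -
  have "(of_int r1 * of_int q2 + of_int r2 * of_int q1 :: real) = 1"
    using assms(3) by (metis of_int_1 of_int_add of_int_mult)
  then have "of_int k / of_int (q1 * q2)
      = (of_int k * (of_int r1 * of_int q2 + of_int r2 * of_int q1)) / (of_int q1 * (of_int q2 :: real))"
    by simp
  also have "\<dots> = of_int (r1 * k) / of_int q1 + of_int (r2 * k) / of_int q2"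
    using assms(1,2) by (simp add: field_simps)
  finally show ?thesis
    by (simp add: e_add)
qed

lemma sum_residues_reindex_bij:
  fixes f :: "int \<Rightarrow> 'b::comm_monoid_add"
  assumes q: "q > 0" and per: "\<And>x. f (x mod q) = f x"
    and gh: "\<And>x. [g (h x) = x] (mod q)" and hg: "\<And>x. [h (g x) = x] (mod q)"
    and gc: "\<And>x y. [x = y] (mod q) \<Longrightarrow> [g x = g y] (mod q)"
    and hc: "\<And>x y. [x = y] (mod q) \<Longrightarrow> [h x = h y] (mod q)"
  shows "(\<Sum>x\<in>{0..<q}. f (g x)) = (\<Sum>x\<in>{0..<q}. f x)"
proof (rule sum.reindex_bij_witness[where j = "\<lambda>x. g x mod q" and i = "\<lambda>x. h x mod q"])
  fix a assume "a \<in> {0..<q}"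
  moreover have "[h (g a mod q) = h (g a)] (mod q)"
    by (rule hc) (simp add: cong_def)
  ultimately show "h (g a mod q) mod q = a"
    using hg cong_trans unfolding cong_def by auto
next
  fix b assume "b \<in> {0..<q}"
  moreover have "[g (h b mod q) = g (h b)] (mod q)"
    by (rule gc) (simp add: cong_def)
  ultimately show "g (h b mod q) mod q = b"
    using gh cong_trans unfolding cong_def by auto
qed (use q per in auto)

lemma sum_residues_shift:
  fixes f :: "int \<Rightarrow> 'b::comm_monoid_add"
  assumes "q > 0" and "\<And>x. f (x mod q) = f x"
  shows "(\<Sum>x\<in>{0..<q}. f (x + v)) = (\<Sum>x\<in>{0..<q}. f x)"
  by (rule sum_residues_reindex_bij[where h = "\<lambda>x. x - v"])
     (use assms in \<open>auto intro: cong_add cong_diff\<close>)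

lemma sum_residues_mult_unit:
  fixes f :: "int \<Rightarrow> 'b::comm_monoid_add"
  assumes "q > 0" and "\<And>x. f (x mod q) = f x" and "coprime u q"
  shows "(\<Sum>x\<in>{0..<q}. f (u * x)) = (\<Sum>x\<in>{0..<q}. f x)"
proof -
  obtain w where w: "[u * w = 1] (mod q)"
    using cong_solve_coprime_int[OF assms(3)] by blast
  have "[u * (w * x) = x] (mod q)" "[w * (u * x) = x] (mod q)" for x
    using cong_scalar_right[OF w, of x] by (simp_all add: ac_simps)
  then show ?thesis
    by (intro sum_residues_reindex_bij[where h = "\<lambda>x. w * x"])
       (use assms in \<open>auto intro: cong_mult cong_refl\<close>)
qed

lemma sum_Icc_1_eq_sum_residues:
  fixes f :: "int \<Rightarrow> 'b::comm_monoid_add"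
  assumes q: "q > 0" and per: "\<And>x. P x \<Longrightarrow> f (x mod q) = f x"
    and Pp: "\<And>x. P (x mod q) = P x"
  shows "(\<Sum>x\<in>{x\<in>{1..q}. P x}. f x) = (\<Sum>x\<in>{x\<in>{0..<q}. P x}. f x)"
proof (rule sum.reindex_bij_witness[where j = "\<lambda>x. x mod q" and i = "\<lambda>x. if x = 0 then q else x"])
  fix a assume a: "a \<in> {x\<in>{1..q}. P x}"
  then have "a = q \<or> (1 \<le> a \<and> a < q)" by auto
  then show "(if a mod q = 0 then q else a mod q) = a"
    by (elim disjE) auto
  show "a mod q \<in> {x\<in>{0..<q}. P x}" "f (a mod q) = f a"
    using a q Pp per by auto
next
  fix b assume "b \<in> {x\<in>{0..<q}. P x}"
  then show "(if b = 0 then q else b) mod q = b" "(if b = 0 then q else b) \<in> {x\<in>{1..q}. P x}"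
    using Pp[of q] q by auto
qed

lemma sum_residues_e_linear:
  assumes q: "q > 0"
  shows "(\<Sum>y\<in>{0..<q}. e (of_int (k * y) / of_int q)) = (if q dvd k then of_int q else 0)"
proof (cases "q dvd k")
  case True
  then have "e (of_int (k * y) / of_int q) = 1" for y
    using e_frac_eq_1_iff[OF q, of "k * y"] by simp
  then show ?thesis using True q by simp
next
  case False
  define F where "F = (\<lambda>y. e (of_int (k * y) / of_int q))"
  define w where "w = e (of_int k / of_int q)"
  have "w \<noteq> 1"
    using False q e_frac_eq_1_iff unfolding w_def by blast
  have "\<And>x. F (x mod q) = F x"
    unfolding F_def using q by (intro e_frac_cong) (auto simp: cong_def mod_mult_right_eq)
  then have "(\<Sum>y\<in>{0..<q}. F (y + 1)) = (\<Sum>y\<in>{0..<q}. F y)"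
    by (rule sum_residues_shift[OF q])
  moreover have "F (y + 1) = w * F y" for y
    unfolding F_def w_def e_add[symmetric] by (simp add: distrib_left add_divide_distrib add.commute)
  ultimately have "w * (\<Sum>y\<in>{0..<q}. F y) = (\<Sum>y\<in>{0..<q}. F y)"
    by (simp add: sum_distrib_left)
  then have "(w - 1) * (\<Sum>y\<in>{0..<q}. F y) = 0"
    by (simp add: algebra_simps)
  then show ?thesis
    using \<open>w \<noteq> 1\<close> False by (simp add: F_def)
qed

section \<open>The Chinese remainder theorem for sums over residues\<close>

lemma bezout_coprime_int:
  fixes a b :: int
  assumes "coprime a b"
  obtains r1 r2 where "r1 * b + r2 * a = 1"
  using bezout_int[of b a] assms by (auto simp: coprime_iff_gcd_eq_1 gcd.commute)

lemma coprime_bezout_coeffs: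
  fixes r1 r2 a b :: int
  assumes "r1 * b + r2 * a = 1"
  shows "coprime r1 a" "coprime r2 b"
proof -
  have left: "coprime r a" if "r * b + r' * a = 1" for r r' a b :: int
  proof (rule coprimeI)
    fix x assume "x dvd r" "x dvd a"
    then have "x dvd r * b + r' * a" by simp
    then show "is_unit x" using that by simp
  qed
  show "coprime r1 a" "coprime r2 b"
    using left[OF assms] left[of r2 a r1 b] assms by (simp_all add: add.commute)
qed

lemma bezout_crt_mod:
  fixes r1 r2 q1 q2 :: int
  assumes "r1 * q2 + r2 * q1 = 1"
  shows "(u * q2 * r1 + v * q1 * r2) mod q1 = u mod q1"
proof -
  have "u * q2 * r1 + v * q1 * r2 = u * (r1 * q2 + r2 * q1) + q1 * (v * r2 - u * r2)"
    by (simp add: algebra_simps)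
  then show ?thesis
    using assms by simp
qed

lemma sum_residues_crt:
  fixes f g :: "int \<Rightarrow> complex"
  assumes q1: "q1 > 0" and q2: "q2 > 0" and cop: "coprime q1 q2"
    and fper: "\<And>x. P1 x \<Longrightarrow> f (x mod q1) = f x"
    and gper: "\<And>x. P2 x \<Longrightarrow> g (x mod q2) = g x"
    and P1p: "\<And>x. P1 (x mod q1) = P1 x" and P2p: "\<And>x. P2 (x mod q2) = P2 x"
  shows "(\<Sum>x\<in>{x\<in>{0..<q1*q2}. P1 x \<and> P2 x}. f x * g x)
       = (\<Sum>x\<in>{x\<in>{0..<q1}. P1 x}. f x) * (\<Sum>x\<in>{x\<in>{0..<q2}. P2 x}. g x)"
proof -
  obtain r1 r2 where r: "r1 * q2 + r2 * q1 = 1"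
    using bezout_coprime_int[OF cop] .
  define A1 where "A1 = {x\<in>{0..<q1}. P1 x}"
  define A2 where "A2 = {x\<in>{0..<q2}. P2 x}"
  define I where "I = (\<lambda>(u, v). (u * q2 * r1 + v * q1 * r2) mod (q1 * q2))"
  have I1: "I (u, v) mod q1 = u mod q1" and I2: "I (u, v) mod q2 = v mod q2" for u v
    using bezout_crt_mod[OF r, of u v] bezout_crt_mod[of r2 q1 r1 q2 v u] r
    unfolding I_def by (simp_all add: mod_mod_cancel add.commute)
  have "(\<Sum>x\<in>{x\<in>{0..<q1*q2}. P1 x \<and> P2 x}. f x * g x) = (\<Sum>(u,v)\<in>A1 \<times> A2. f u * g v)"
  proof (rule sum.reindex_bij_witness[where j = "\<lambda>x. (x mod q1, x mod q2)" and i = I])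
    fix a assume a: "a \<in> {x\<in>{0..<q1*q2}. P1 x \<and> P2 x}"
    have "[I (a mod q1, a mod q2) = a] (mod q1)" "[I (a mod q1, a mod q2) = a] (mod q2)"
      using I1 I2 unfolding cong_def by simp_all
    then have "[I (a mod q1, a mod q2) = a] (mod q1 * q2)"
      using coprime_cong_mult cop by blast
    then show "I (a mod q1, a mod q2) = a"
      using a unfolding I_def cong_def by simp
    show "(a mod q1, a mod q2) \<in> A1 \<times> A2" "(case (a mod q1, a mod q2) of (u, v) \<Rightarrow> f u * g v) = f a * g a"
      using a q1 q2 P1p P2p fper gper unfolding A1_def A2_def by simp_all
  next
    fix b assume "b \<in> A1 \<times> A2"
    then obtain u v where b: "b = (u, v)" "u \<in> A1" "v \<in> A2" by auto
    then have "I b mod q1 = u" "I b mod q2 = v"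
      using I1 I2 unfolding A1_def A2_def by auto
    moreover have "0 \<le> I b \<and> I b < q1 * q2"
      unfolding I_def b using q1 q2 by simp
    ultimately show "(I b mod q1, I b mod q2) = b" "I b \<in> {x\<in>{0..<q1*q2}. P1 x \<and> P2 x}"
      using b P1p[of "I b"] P2p[of "I b"] unfolding A1_def A2_def by auto
  qed
  then show ?thesis
    unfolding A1_def A2_def by (simp add: sum_product sum.cartesian_product)
qed


section \<open>Complete quadratic exponential sums\<close>

definition quad_exp_sum :: "int \<Rightarrow> int \<Rightarrow> int \<Rightarrow> complex" where
  "quad_exp_sum q b n = (\<Sum>x\<in>{0..<q}. e (of_int (b * x^2 + n * x) / of_int q))"

lemma quad_exp_summand_mod:
  assumes "q > 0"
  shows "e (of_int (b * (x mod q)^2 + n * (x mod q)) / of_int q) = e (of_int (b * x^2 + n * x) / of_int q)"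
  using assms by (intro e_frac_cong cong_add cong_mult cong_pow cong_refl) (auto simp: cong_def)

lemma S_eq_quad_exp_sum:
  assumes q: "q > 0"
  shows "S q b n = quad_exp_sum q b n"
proof -
  define f where "f x = e (of_int (b * x^2 + n * x) / of_int q)" for x
  have "(\<Sum>x\<in>{x\<in>{1..q}. True}. f x) = (\<Sum>x\<in>{x\<in>{0..<q}. True}. f x)"
    by (rule sum_Icc_1_eq_sum_residues[OF q]) (simp_all only: f_def quad_exp_summand_mod[OF q])
  then show ?thesis
    by (simp only: S_def quad_exp_sum_def f_def simp_thms Collect_mem_eq)
qed

lemma quad_exp_sum_cong:
  assumes "q > 0" and "[b = b'] (mod q)"
  shows "quad_exp_sum q b n = quad_exp_sum q b' n"
  unfolding quad_exp_sum_def
  by (intro sum.cong refl e_frac_cong) (use assms in \<open>auto intro: cong_add cong_mult cong_refl\<close>)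

lemma quad_exp_sum_crt:
  assumes q1: "q1 > 0" and q2: "q2 > 0" and cop: "coprime q1 q2" and r: "r1 * q2 + r2 * q1 = 1"
  shows "quad_exp_sum (q1 * q2) b n = quad_exp_sum q1 (r1 * b) (r1 * n) * quad_exp_sum q2 (r2 * b) (r2 * n)"
proof -
  define F1 where "F1 = (\<lambda>x. e (of_int ((r1 * b) * x^2 + (r1 * n) * x) / of_int q1))"
  define F2 where "F2 = (\<lambda>x. e (of_int ((r2 * b) * x^2 + (r2 * n) * x) / of_int q2))"
  have "e (of_int (b * x^2 + n * x) / of_int (q1 * q2)) = F1 x * F2 x" for x
    using e_frac_mult_split[of q1 q2 r1 r2 "b * x^2 + n * x"] q1 q2 r
    unfolding F1_def F2_def by (simp add: algebra_simps)
  then have "quad_exp_sum (q1 * q2) b n = (\<Sum>x\<in>{0..<q1*q2}. F1 x * F2 x)"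
    unfolding quad_exp_sum_def by (rule sum.cong[OF refl])
  also have "\<dots> = (\<Sum>x\<in>{0..<q1}. F1 x) * (\<Sum>x\<in>{0..<q2}. F2 x)"
  proof -
    have "(\<Sum>x\<in>{x\<in>{0..<q1*q2}. True \<and> True}. F1 x * F2 x)
        = (\<Sum>x\<in>{x\<in>{0..<q1}. True}. F1 x) * (\<Sum>x\<in>{x\<in>{0..<q2}. True}. F2 x)"
      by (rule sum_residues_crt[OF q1 q2 cop])
         (simp_all only: F1_def F2_def quad_exp_summand_mod[OF q1] quad_exp_summand_mod[OF q2])
    then show ?thesis
      by (simp only: simp_thms Collect_mem_eq)
  qed
  finally show ?thesis
    unfolding quad_exp_sum_def F1_def F2_def .
qed

text \<open>Writing \<open>x = y + h\<close> in the double sum for \<open>|S|\<^sup>2\<close>, the inner sum over \<open>y\<close> is a complete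
  linear sum in \<open>y\<close>, which kills all \<open>h\<close> except those with \<open>q dvd 2 * h\<close>.\<close>

lemma quad_exp_sum_mult_cnj:
  assumes q: "q > 0" and cop: "coprime b q"
  shows "quad_exp_sum q b n * cnj (quad_exp_sum q b n)
       = of_int q * (\<Sum>h\<in>{h\<in>{0..<q}. q dvd 2 * h}. e (of_int (b * h^2 + n * h) / of_int q))"
proof -
  define f where "f = (\<lambda>x::int. b * x^2 + n * x)"
  define E where "E = (\<lambda>x y. e (of_int (f x - f y) / of_int q))"
  define g where "g = (\<lambda>h. e (of_int (f h) / of_int q))"
  have shift: "(\<Sum>x\<in>{0..<q}. E x y) = (\<Sum>h\<in>{0..<q}. g h * e (of_int ((2 * b * h) * y) / of_int q))" for y
  proof -
    have "E (x mod q) y = E x y" for x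
      unfolding E_def f_def using q
      by (intro e_frac_cong cong_diff cong_add cong_mult cong_pow cong_refl) (auto simp: cong_def)
    then have "(\<Sum>x\<in>{0..<q}. E x y) = (\<Sum>h\<in>{0..<q}. E (h + y) y)"
      by (intro sum_residues_shift[symmetric] q)
    moreover have "f (h + y) - f y = f h + (2 * b * h) * y" for h
      unfolding f_def by (simp add: power2_eq_square algebra_simps)
    ultimately show ?thesis
      unfolding E_def g_def by (simp add: e_add[symmetric] add_divide_distrib)
  qed
  have dvd_iff: "q dvd 2 * b * h \<longleftrightarrow> q dvd 2 * h" for h
    using cop coprime_dvd_mult_left_iff[of q b "2 * h"] by (simp add: coprime_commute ac_simps)
  have "quad_exp_sum q b n * cnj (quad_exp_sum q b n) = (\<Sum>y\<in>{0..<q}. \<Sum>x\<in>{0..<q}. E x y)"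
    unfolding quad_exp_sum_def E_def f_def
    by (subst sum.swap) (simp add: cnj_sum sum_product cnj_e e_add[symmetric] diff_divide_distrib)
  also have "\<dots> = (\<Sum>h\<in>{0..<q}. g h * (\<Sum>y\<in>{0..<q}. e (of_int ((2 * b * h) * y) / of_int q)))"
    unfolding shift by (subst sum.swap) (simp add: sum_distrib_left)
  also have "\<dots> = (\<Sum>h\<in>{0..<q}. if q dvd 2 * h then of_int q * g h else 0)"
    using sum_residues_e_linear[OF q, of "2 * b * h" for h] dvd_iff by (intro sum.cong refl) simp
  also have "\<dots> = (\<Sum>h\<in>{h\<in>{0..<q}. q dvd 2 * h}. of_int q * g h)"
    by (rule sum.inter_filter[symmetric]) simp
  also have "\<dots> = of_int q * (\<Sum>h\<in>{h\<in>{0..<q}. q dvd 2 * h}. g h)"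
    by (simp add: sum_distrib_left)
  finally show ?thesis
    unfolding g_def f_def .
qed

lemma residue_dvd_double_cases:
  fixes q h :: int
  assumes "q > 0" "0 \<le> h" "h < q" "q dvd 2 * h"
  shows "h = 0 \<or> 2 * h = q"
proof -
  obtain k where k: "2 * h = q * k"
    using assms(4) by (auto simp: dvd_def)
  with assms have "q * k < q * 2" "0 \<le> q * k"
    by linarith+
  then have "0 \<le> k" "k < 2"
    using assms(1) by (simp_all add: zero_le_mult_iff mult_less_cancel_left)
  then have "k = 0 \<or> k = 1" by linarith
  with k show ?thesis by auto
qed

lemma residues_dvd_double_subset:
  fixes q :: int
  assumes "q > 0"
  shows "{h\<in>{0..<q}. q dvd 2 * h} \<subseteq> (if even q then {0, q div 2} else {0})"
  using residue_dvd_double_cases[OF assms] by fastforce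

lemma norm_quad_exp_sum_sq_le:
  assumes q: "q > 0" and cop: "coprime b q"
  shows "(cmod (quad_exp_sum q b n))^2 \<le> (if even q then 2 else 1) * of_int q"
proof -
  define H where "H = {h\<in>{0..<q}. q dvd 2 * h}"
  have "card H \<le> card (if even q then {0, q div 2} else {0::int})"
    unfolding H_def by (rule card_mono[OF _ residues_dvd_double_subset[OF q]]) simp
  then have card: "real (card H) \<le> (if even q then 2 else 1)"
    by (auto split: if_splits intro: order_trans[OF _ card_insert_le_m1])
  have "(cmod (quad_exp_sum q b n))^2 = cmod (quad_exp_sum q b n * cnj (quad_exp_sum q b n))"
    by (simp add: norm_mult power2_eq_square)
  also have "\<dots> = of_int q * cmod (\<Sum>h\<in>H. e (of_int (b * h^2 + n * h) / of_int q))"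
    unfolding quad_exp_sum_mult_cnj[OF q cop] H_def using q by (simp add: norm_mult)
  also have "\<dots> \<le> of_int q * (\<Sum>h\<in>H. cmod (e (of_int (b * h^2 + n * h) / of_int q)))"
    using q by (intro mult_left_mono norm_sum) auto
  also have "\<dots> \<le> (if even q then 2 else 1) * of_int q"
    using card q by (simp add: mult.commute)
  finally show ?thesis .
qed

lemma norm_quad_exp_sum_le:
  assumes "q > 0" and "coprime b q"
  shows "cmod (quad_exp_sum q b n) \<le> sqrt ((if even q then 2 else 1) * of_int q)"
  by (rule real_le_rsqrt[OF norm_quad_exp_sum_sq_le[OF assms]])

lemma norm_quad_exp_sum_odd:
  assumes q: "q > 0" and "odd q" and cop: "coprime b q"
  shows "cmod (quad_exp_sum q b n) = sqrt (of_int q)"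
proof -
  have "{h\<in>{0..<q}. q dvd 2 * h} = {0}"
    using residues_dvd_double_subset[OF q] \<open>odd q\<close> q by auto
  then have "quad_exp_sum q b n * cnj (quad_exp_sum q b n) = of_int q"
    using quad_exp_sum_mult_cnj[OF q cop] by simp
  then have "complex_of_real ((cmod (quad_exp_sum q b n))^2) = of_int q"
    by (simp only: complex_norm_square)
  then have "(cmod (quad_exp_sum q b n))^2 = of_int q"
    by (metis of_real_eq_iff of_real_of_int_eq)
  then show ?thesis
    by (metis norm_ge_zero real_sqrt_unique)
qed


text \<open>Completing the square: \<open>b x\<^sup>2 + n x \<equiv> b (x + 2 k n)\<^sup>2 - k n\<^sup>2\<close> when \<open>4 b k \<equiv> 1\<close>.\<close>

lemma quad_exp_sum_complete_square:
  assumes q: "q > 0" and k: "[4 * b * k = 1] (mod q)"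
  shows "quad_exp_sum q b n = e (of_int (- (k * n^2)) / of_int q) * quad_exp_sum q b 0"
proof -
  define f where "f x = e (of_int (b * x^2 + 0 * x) / of_int q)" for x
  have "e (of_int (b * x^2 + n * x) / of_int q) = e (of_int (- (k * n^2)) / of_int q) * f (x + 2 * k * n)" for x
  proof -
    have "q dvd (4 * b * k - 1) * (n * x + k * n^2)"
      using k by (simp add: cong_iff_dvd_diff)
    moreover have "(4 * b * k - 1) * (n * x + k * n^2)
        = (- (k * n^2) + b * (x + 2 * k * n)^2) - (b * x^2 + n * x)"
      by (simp add: power2_eq_square algebra_simps)
    ultimately have "[b * x^2 + n * x = - (k * n^2) + (b * (x + 2 * k * n)^2 + 0 * (x + 2 * k * n))] (mod q)"
      by (simp add: cong_iff_dvd_diff dvd_diff_commute)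
    then have "e (of_int (b * x^2 + n * x) / of_int q)
        = e (of_int (- (k * n^2) + (b * (x + 2 * k * n)^2 + 0 * (x + 2 * k * n))) / of_int q)"
      using q by (intro e_frac_cong) auto
    then show ?thesis
      unfolding f_def by (simp only: of_int_add add_divide_distrib e_add)
  qed
  then have "quad_exp_sum q b n = e (of_int (- (k * n^2)) / of_int q) * (\<Sum>x\<in>{0..<q}. f (x + 2 * k * n))"
    unfolding quad_exp_sum_def by (simp add: sum_distrib_left)
  also have "(\<Sum>x\<in>{0..<q}. f (x + 2 * k * n)) = quad_exp_sum q b 0"
    unfolding quad_exp_sum_def f_def[symmetric]
    by (rule sum_residues_shift[OF q]) (simp only: f_def quad_exp_summand_mod[OF q])
  finally show ?thesis .
qed

lemma inv_mod_correct: "coprime a q \<Longrightarrow> [a * inv_mod q a = 1] (mod q)"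
  unfolding inv_mod_def by (rule someI_ex) (rule cong_solve_coprime_int)

lemma cong_inverse_unique:
  fixes a b b' q :: int
  assumes "[a * b = 1] (mod q)" "[a * b' = 1] (mod q)"
  shows "[b = b'] (mod q)"
proof -
  have "[b * (a * b') = b * 1] (mod q)" "[(a * b) * b' = 1 * b'] (mod q)"
    using cong_mult[OF cong_refl assms(2)] cong_mult[OF assms(1) cong_refl] .
  then show ?thesis
    by (metis cong_sym cong_trans mult.assoc mult.commute mult_1)
qed

lemma coprime_inv_mod:
  assumes "coprime a q"
  shows "coprime (inv_mod q a) q"
proof -
  have "[inv_mod q a * a = 1] (mod q)"
    using inv_mod_correct[OF assms] by (simp add: mult.commute)
  then show ?thesis
    using coprime_iff_invertible_int by blast
qed

lemma inv_mod_dvd_modulus: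
  assumes "q' dvd q" "coprime a q"
  shows "[inv_mod q a = inv_mod q' a] (mod q')"
proof -
  have "coprime a q'"
    using assms coprime_imp_coprime dvd_trans by (metis dvd_refl)
  then show ?thesis
    using cong_inverse_unique cong_dvd_modulus[OF inv_mod_correct[OF assms(2)] assms(1)] inv_mod_correct
    by blast
qed

lemma inv_mod_mod:
  assumes q: "q > 0" and a: "coprime a q"
  shows "[inv_mod q (a mod q) = inv_mod q a] (mod q)"
proof -
  have "coprime (a mod q) q"
    using a q coprime_mod_left_iff by auto
  moreover have "[a * inv_mod q (a mod q) = (a mod q) * inv_mod q (a mod q)] (mod q)"
    by (rule cong_mult) (auto simp: cong_def)
  ultimately have "[a * inv_mod q (a mod q) = 1] (mod q)"
    using inv_mod_correct cong_trans by blast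
  then show ?thesis
    using cong_inverse_unique inv_mod_correct[OF a] by blast
qed

lemma inv_mod_inv_mod:
  assumes q: "q > 0" and a: "coprime a q"
  shows "[inv_mod q (inv_mod q a mod q) = a] (mod q)"
proof -
  have "[inv_mod q a * a = 1] (mod q)"
    using inv_mod_correct[OF a] by (simp add: mult.commute)
  then have "[inv_mod q (inv_mod q a) = a] (mod q)"
    using cong_inverse_unique inv_mod_correct[OF coprime_inv_mod[OF a]] by blast
  then show ?thesis
    using inv_mod_mod[OF q coprime_inv_mod[OF a]] cong_trans by blast
qed

text \<open>The Chinese remainder theorem multiplies the coefficients of \<open>T\<close> by Bezout coefficients,
  so the factors are sums of the same shape with the quadratic coefficient \<open>a\<close> replaced by \<open>c * a\<close>.\<close>

definition T_scaled :: "int \<Rightarrow> int \<Rightarrow> int \<Rightarrow> int \<Rightarrow> int \<Rightarrow> int \<Rightarrow> complex" where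
  "T_scaled q c n1 n2 n3 m = (\<Sum>a\<in>{a\<in>{0..<q}. coprime a q}.
      quad_exp_sum q (c * a) n1 * quad_exp_sum q (c * a) n2 * quad_exp_sum q (c * a) n3
        * e (of_int (inv_mod q a * m) / of_int q))"

lemma T_scaled_summand_mod:
  assumes q: "q > 0" and a: "coprime a q"
  shows "quad_exp_sum q (c * (a mod q)) n1 * quad_exp_sum q (c * (a mod q)) n2
           * quad_exp_sum q (c * (a mod q)) n3 * e (of_int (inv_mod q (a mod q) * m) / of_int q)
       = quad_exp_sum q (c * a) n1 * quad_exp_sum q (c * a) n2 * quad_exp_sum q (c * a) n3
           * e (of_int (inv_mod q a * m) / of_int q)"
proof -
  have "[c * (a mod q) = c * a] (mod q)"
    by (rule cong_mult) (auto simp: cong_def)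
  then have "quad_exp_sum q (c * (a mod q)) n = quad_exp_sum q (c * a) n" for n
    using quad_exp_sum_cong q by blast
  moreover have "e (of_int (inv_mod q (a mod q) * m) / of_int q) = e (of_int (inv_mod q a * m) / of_int q)"
    using q inv_mod_mod[OF q a] by (intro e_frac_cong) (auto intro: cong_mult)
  ultimately show ?thesis
    by simp
qed

lemma T_eq_T_scaled:
  assumes q: "q > 0"
  shows "T q n1 n2 n3 m = T_scaled q 1 n1 n2 n3 m"
proof -
  have "T q n1 n2 n3 m = (\<Sum>a\<in>{a\<in>{1..q}. coprime a q}.
      quad_exp_sum q (1 * a) n1 * quad_exp_sum q (1 * a) n2 * quad_exp_sum q (1 * a) n3
        * e (of_int (inv_mod q a * m) / of_int q))"
    unfolding T_def using q by (simp add: S_eq_quad_exp_sum)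
  also have "\<dots> = T_scaled q 1 n1 n2 n3 m"
    unfolding T_scaled_def
  proof (rule sum_Icc_1_eq_sum_residues[OF q])
    fix x :: int
    assume "coprime x q"
    then show "quad_exp_sum q (1 * (x mod q)) n1 * quad_exp_sum q (1 * (x mod q)) n2
        * quad_exp_sum q (1 * (x mod q)) n3 * e (of_int (inv_mod q (x mod q) * m) / of_int q)
      = quad_exp_sum q (1 * x) n1 * quad_exp_sum q (1 * x) n2 * quad_exp_sum q (1 * x) n3
        * e (of_int (inv_mod q x * m) / of_int q)"
      by (rule T_scaled_summand_mod[OF q])
  qed (use q coprime_mod_left_iff in auto)
  finally show ?thesis .
qed

lemma e_inv_mod_crt:
  assumes q1: "q1 > 0" and q2: "q2 > 0" and r: "r1 * q2 + r2 * q1 = 1"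
    and a: "coprime a (q1 * q2)"
  shows "e (of_int (inv_mod (q1 * q2) a * m) / of_int (q1 * q2))
       = e (of_int (inv_mod q1 a * (r1 * m)) / of_int q1) * e (of_int (inv_mod q2 a * (r2 * m)) / of_int q2)"
proof -
  have c1: "[r1 * (inv_mod (q1 * q2) a * m) = inv_mod q1 a * (r1 * m)] (mod q1)"
    and c2: "[r2 * (inv_mod (q1 * q2) a * m) = inv_mod q2 a * (r2 * m)] (mod q2)"
    using inv_mod_dvd_modulus[OF _ a, of q1] inv_mod_dvd_modulus[OF _ a, of q2]
    by (auto simp: ac_simps intro: cong_mult cong_refl)
  have "e (of_int (r1 * (inv_mod (q1 * q2) a * m)) / of_int q1) = e (of_int (inv_mod q1 a * (r1 * m)) / of_int q1)"
    by (rule e_frac_cong[OF _ c1]) (use q1 in simp)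
  moreover have "e (of_int (r2 * (inv_mod (q1 * q2) a * m)) / of_int q2) = e (of_int (inv_mod q2 a * (r2 * m)) / of_int q2)"
    by (rule e_frac_cong[OF _ c2]) (use q2 in simp)
  ultimately show ?thesis
    using e_frac_mult_split[of q1 q2 r1 r2 "inv_mod (q1 * q2) a * m"] q1 q2 r
    by simp
qed

lemma T_scaled_crt:
  assumes q1: "q1 > 0" and q2: "q2 > 0" and cop: "coprime q1 q2" and r: "r1 * q2 + r2 * q1 = 1"
  shows "T_scaled (q1 * q2) c n1 n2 n3 m
       = T_scaled q1 (r1 * c) (r1 * n1) (r1 * n2) (r1 * n3) (r1 * m)
         * T_scaled q2 (r2 * c) (r2 * n1) (r2 * n2) (r2 * n3) (r2 * m)"
proof -
  define f where "f a = quad_exp_sum q1 ((r1 * c) * a) (r1 * n1) * quad_exp_sum q1 ((r1 * c) * a) (r1 * n2)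
     * quad_exp_sum q1 ((r1 * c) * a) (r1 * n3) * e (of_int (inv_mod q1 a * (r1 * m)) / of_int q1)" for a
  define g where "g a = quad_exp_sum q2 ((r2 * c) * a) (r2 * n1) * quad_exp_sum q2 ((r2 * c) * a) (r2 * n2)
     * quad_exp_sum q2 ((r2 * c) * a) (r2 * n3) * e (of_int (inv_mod q2 a * (r2 * m)) / of_int q2)" for a
  have "quad_exp_sum (q1 * q2) (c * a) n1 * quad_exp_sum (q1 * q2) (c * a) n2 * quad_exp_sum (q1 * q2) (c * a) n3
       * e (of_int (inv_mod (q1 * q2) a * m) / of_int (q1 * q2)) = f a * g a"
    if "coprime a (q1 * q2)" for a
    unfolding f_def g_def quad_exp_sum_crt[OF q1 q2 cop r] e_inv_mod_crt[OF q1 q2 r that]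
    by (simp add: ac_simps)
  then have "T_scaled (q1 * q2) c n1 n2 n3 m
      = (\<Sum>a\<in>{a\<in>{0..<q1*q2}. coprime a q1 \<and> coprime a q2}. f a * g a)"
    unfolding T_scaled_def by (intro sum.cong) auto
  also have "\<dots> = (\<Sum>a\<in>{a\<in>{0..<q1}. coprime a q1}. f a) * (\<Sum>a\<in>{a\<in>{0..<q2}. coprime a q2}. g a)"
  proof (rule sum_residues_crt[OF q1 q2 cop])
    show "f (x mod q1) = f x" if "coprime x q1" for x
      unfolding f_def by (rule T_scaled_summand_mod[OF q1 that])
    show "g (x mod q2) = g x" if "coprime x q2" for x
      unfolding g_def by (rule T_scaled_summand_mod[OF q2 that])
  qed (use q1 q2 coprime_mod_left_iff in auto)
  finally show ?thesis
    unfolding T_scaled_def f_def g_def .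
qed

lemma T_scaled_modulus_1: "T_scaled 1 c n1 n2 n3 m = 1"
proof -
  have "{a\<in>{0..<(1::int)}. coprime a 1} = {0}" "{0..<(1::int)} = {0}"
    by auto
  then show ?thesis
    using e_of_int[of "inv_mod 1 0 * m"] unfolding T_scaled_def quad_exp_sum_def by simp
qed

lemma norm_T_scaled_le:
  assumes q: "q > 0" and cop: "coprime c q"
  shows "cmod (T_scaled q c n1 n2 n3 m)
       \<le> card {a\<in>{0..<q}. coprime a q} * sqrt ((if even q then 2 else 1) * of_int q) ^ 3"
proof -
  define s where "s = sqrt ((if even q then 2 else 1) * (of_int q :: real))"
  have "cmod (quad_exp_sum q (c * a) n1 * quad_exp_sum q (c * a) n2 * quad_exp_sum q (c * a) n3
          * e (of_int (inv_mod q a * m) / of_int q)) \<le> s ^ 3"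
    if "coprime a q" for a
  proof -
    have "cmod (quad_exp_sum q (c * a) n) \<le> s" for n
      unfolding s_def using that cop by (intro norm_quad_exp_sum_le q) simp
    then have "cmod (quad_exp_sum q (c * a) n1) * cmod (quad_exp_sum q (c * a) n2)
        * cmod (quad_exp_sum q (c * a) n3) \<le> s * s * s"
      using q by (intro mult_mono) (auto simp: s_def)
    then show ?thesis
      by (simp add: norm_mult power3_eq_cube)
  qed
  then have "cmod (T_scaled q c n1 n2 n3 m) \<le> (\<Sum>a\<in>{a\<in>{0..<q}. coprime a q}. s ^ 3)"
    unfolding T_scaled_def by (intro order_trans[OF norm_sum sum_mono]) auto
  then show ?thesis
    unfolding s_def by simp
qed


section \<open>Gauss sums modulo an odd prime\<close>

lemma Legendre_cases: "Legendre t p = 0 \<or> Legendre t p = 1 \<or> Legendre t p = -1"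
  unfolding Legendre_def by auto

lemma Legendre_eq_0_iff: "Legendre t p = 0 \<longleftrightarrow> p dvd t"
  unfolding Legendre_def by (auto simp: cong_0_iff)

lemma Legendre_cong: "[t = t'] (mod p) \<Longrightarrow> Legendre t p = Legendre t' p"
  unfolding Legendre_def QuadRes_def cong_def by auto

definition legendre_exp_sum :: "int \<Rightarrow> int \<Rightarrow> complex" where
  "legendre_exp_sum p d = (\<Sum>t\<in>{0..<p}. of_int (Legendre t p) * e (of_int (d * t) / of_int p))"

context
  fixes p :: int
  assumes prime: "prime p" and p_gt_2: "p > 2"
begin

private lemma p_pos: "p > 0"
  using p_gt_2 by simp

private lemma coprime_imp_not_dvd: "coprime x p \<Longrightarrow> \<not> p dvd x"
  using coprime_common_divisor[of x p p] prime not_prime_unit by auto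

private lemma not_dvd_small: "\<bar>d\<bar> \<le> 2 \<Longrightarrow> p dvd d \<Longrightarrow> d = 0"
  using dvd_imp_le_int[of d p] p_gt_2 by fastforce

lemma Legendre_mult: "Legendre (x * y) p = Legendre x p * Legendre y p"
proof -
  have "prime (nat p)" "2 < nat p" "int (nat p) = p"
    using prime p_gt_2 by (simp_all add: prime_nat_iff_prime)
  then have euler: "[Legendre z p = z ^ ((nat p - 1) div 2)] (mod p)" for z
    using euler_criterion[of "nat p" z] by simp
  have "[Legendre (x * y) p = Legendre x p * Legendre y p] (mod p)"
    using euler[of "x * y"] cong_mult[OF euler[of x] euler[of y]]
    by (metis cong_sym cong_trans power_mult_distrib)
  moreover have "\<bar>Legendre (x * y) p - Legendre x p * Legendre y p\<bar> \<le> 2"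
    using Legendre_cases[of "x * y" p] Legendre_cases[of x p] Legendre_cases[of y p] by auto
  ultimately show ?thesis
    using not_dvd_small by (fastforce simp: cong_iff_dvd_diff)
qed

lemma Legendre_one: "Legendre 1 p = 1"
proof -
  have "\<not> [1 = 0] (mod p)"
    using p_gt_2 by (simp add: cong_0_iff)
  moreover have "QuadRes p 1"
    unfolding QuadRes_def by (rule exI[of _ 1]) simp
  ultimately show ?thesis
    unfolding Legendre_def by simp
qed

lemma Legendre_mult_self: "\<not> p dvd t \<Longrightarrow> Legendre t p * Legendre t p = 1"
  using Legendre_cases[of t p] Legendre_eq_0_iff[of t p] by auto

lemma Legendre_inv_mod:
  assumes "coprime a p"
  shows "Legendre (inv_mod p a) p = Legendre a p"
proof -
  have "\<not> p dvd a"
    using coprime_imp_not_dvd[OF assms] .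
  have "Legendre a p * Legendre (inv_mod p a) p = 1"
    using Legendre_mult[of a] Legendre_cong[OF inv_mod_correct[OF assms]] Legendre_one by simp
  then show ?thesis
    using Legendre_mult_self[OF \<open>\<not> p dvd a\<close>] Legendre_cases[of a p] by auto
qed

lemma cong_square_imp_cong_or_cong_neg:
  assumes "[x^2 = y^2] (mod p)"
  shows "[x = y] (mod p) \<or> [x = - y] (mod p)"
proof -
  have "p dvd (x - y) * (x + y)"
    using assms by (simp add: cong_iff_dvd_diff power2_eq_square algebra_simps)
  then show ?thesis
    using prime prime_dvd_mult_iff by (auto simp: cong_iff_dvd_diff)
qed

lemma card_square_roots_QuadRes:
  assumes t: "\<not> p dvd t" and y: "[y^2 = t] (mod p)"
  shows "card {x\<in>{0..<p}. [x^2 = t] (mod p)} = 2"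
proof -
  have "\<not> p dvd y"
  proof
    assume "p dvd y"
    then have "p dvd y^2" "p dvd y^2 - t"
      using y by (simp_all add: cong_iff_dvd_diff power2_eq_square)
    then have "p dvd y^2 - (y^2 - t)"
      by (rule dvd_diff)
    then show False
      using t by simp
  qed
  have "{x\<in>{0..<p}. [x^2 = t] (mod p)} = {y mod p, (- y) mod p}"
  proof (intro equalityI subsetI)
    fix x assume "x \<in> {x\<in>{0..<p}. [x^2 = t] (mod p)}"
    then have "x \<in> {0..<p}" "[x^2 = t] (mod p)"
      by auto
    moreover from this(2) have "[x = y] (mod p) \<or> [x = - y] (mod p)"
      using y cong_sym cong_trans cong_square_imp_cong_or_cong_neg by blast
    ultimately show "x \<in> {y mod p, (- y) mod p}"
      by (auto simp: cong_def)
  next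
    have "[(y mod p)^2 = y^2] (mod p)" "[((- y) mod p)^2 = (- y)^2] (mod p)"
      by (intro cong_pow; simp add: cong_def)+
    then show "x \<in> {x\<in>{0..<p}. [x^2 = t] (mod p)}" if "x \<in> {y mod p, (- y) mod p}" for x
      using that y p_pos cong_trans by auto
  qed
  moreover have "y mod p \<noteq> (- y) mod p"
  proof
    assume "y mod p = (- y) mod p"
    then have "p dvd 2 * y"
      by (simp add: mod_eq_dvd_iff)
    moreover have "\<not> p dvd 2"
      using not_dvd_small[of 2] by auto
    ultimately show False
      using \<open>\<not> p dvd y\<close> prime prime_dvd_mult_iff by blast
  qed
  ultimately show ?thesis
    by simp
qed

lemma card_square_roots: "card {x\<in>{0..<p}. [x^2 = t] (mod p)} = nat (1 + Legendre t p)"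
proof (cases "p dvd t")
  case True
  have "{x\<in>{0..<p}. [x^2 = t] (mod p)} = {0}"
  proof (intro equalityI subsetI)
    fix x assume x: "x \<in> {x\<in>{0..<p}. [x^2 = t] (mod p)}"
    then have "p dvd x^2"
      using True by (simp add: cong_iff_dvd_diff) (metis dvd_add_left_iff diff_add_cancel)
    then have "p dvd x"
      using prime prime_dvd_power_int by blast
    then show "x \<in> {0}"
      using x by (auto simp: zdvd_not_zless dest: zdvd_imp_le)
  qed (use True p_pos in \<open>simp add: cong_iff_dvd_diff\<close>)
  then show ?thesis
    using Legendre_eq_0_iff[of t p] True by simp
next
  case False
  show ?thesis
  proof (cases "QuadRes p t")
    case True
    then obtain y where "[y^2 = t] (mod p)"
      unfolding QuadRes_def by blast
    moreover have "Legendre t p = 1"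
      using True False unfolding Legendre_def by (simp add: cong_0_iff)
    ultimately show ?thesis
      using card_square_roots_QuadRes[OF False] by simp
  next
    case nonres: False
    then have "Legendre t p = -1" "{x\<in>{0..<p}. [x^2 = t] (mod p)} = {}"
      using False unfolding Legendre_def QuadRes_def by (auto simp: cong_0_iff)
    then show ?thesis
      by (simp only:) simp
  qed
qed

text \<open>Grouping \<open>x\<close> by the value \<open>t = x\<^sup>2 mod p\<close>, each \<open>t\<close> occurs \<open>1 + (t/p)\<close> times.\<close>

lemma quad_exp_sum_prime_eq:
  "quad_exp_sum p d 0 = (\<Sum>t\<in>{0..<p}. of_int (1 + Legendre t p) * e (of_int (d * t) / of_int p))"
proof -
  define h where "h x = e (of_int (d * (x^2 mod p)) / of_int p)" for x
  have "quad_exp_sum p d 0 = (\<Sum>x\<in>{0..<p}. h x)"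
    unfolding quad_exp_sum_def h_def
    by (rule sum.cong[OF refl], rule e_frac_cong) (use p_pos in \<open>auto simp: cong_def mod_mult_right_eq\<close>)
  also have "\<dots> = (\<Sum>t\<in>{0..<p}. sum h {x\<in>{0..<p}. x^2 mod p = t})"
    by (rule sum.group[symmetric]) (use p_pos in auto)
  also have "\<dots> = (\<Sum>t\<in>{0..<p}. of_int (1 + Legendre t p) * e (of_int (d * t) / of_int p))"
  proof (rule sum.cong[OF refl])
    fix t assume t: "t \<in> {0..<p}"
    then have roots: "{x\<in>{0..<p}. x^2 mod p = t} = {x\<in>{0..<p}. [x^2 = t] (mod p)}"
      by (auto simp: cong_def)
    have "sum h {x\<in>{0..<p}. x^2 mod p = t}
        = (\<Sum>x\<in>{x\<in>{0..<p}. x^2 mod p = t}. e (of_int (d * t) / of_int p))"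
      unfolding h_def by (rule sum.cong) auto
    also have "\<dots> = of_nat (card {x\<in>{0..<p}. [x^2 = t] (mod p)}) * e (of_int (d * t) / of_int p)"
      unfolding roots by simp
    also have "\<dots> = of_int (1 + Legendre t p) * e (of_int (d * t) / of_int p)"
      unfolding card_square_roots using Legendre_cases[of t p] by auto
    finally show "sum h {x\<in>{0..<p}. x^2 mod p = t} = of_int (1 + Legendre t p) * e (of_int (d * t) / of_int p)" .
  qed
  finally show ?thesis .
qed

lemma legendre_exp_sum_eq:
  "legendre_exp_sum p d = quad_exp_sum p d 0 - (if p dvd d then of_int p else 0)"
proof -
  have "quad_exp_sum p d 0 = (\<Sum>t\<in>{0..<p}. e (of_int (d * t) / of_int p)) + legendre_exp_sum p d"
    unfolding quad_exp_sum_prime_eq legendre_exp_sum_def by (simp add: distrib_right sum.distrib)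
  then show ?thesis
    using sum_residues_e_linear[OF p_pos, of d] by simp
qed

lemma legendre_exp_sum_unit:
  assumes "\<not> p dvd d"
  shows "legendre_exp_sum p d = of_int (Legendre d p) * legendre_exp_sum p 1"
proof -
  define F where "F t = of_int (Legendre t p) * e (of_int t / of_int p)" for t
  have "F (x mod p) = F x" for x
  proof -
    have "Legendre (x mod p) p = Legendre x p"
      by (rule Legendre_cong) (simp add: cong_def)
    moreover have "e (of_int (x mod p) / of_int p) = e (of_int x / of_int p)"
      by (rule e_frac_cong) (use p_pos in \<open>auto simp: cong_def\<close>)
    ultimately show ?thesis
      unfolding F_def by simp
  qed
  moreover have "coprime d p"
    using assms prime prime_imp_coprime coprime_commute by blast
  ultimately have "(\<Sum>t\<in>{0..<p}. F t) = (\<Sum>t\<in>{0..<p}. F (d * t))"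
    by (intro sum_residues_mult_unit[symmetric] p_pos)
  then have "legendre_exp_sum p 1 = of_int (Legendre d p) * legendre_exp_sum p d"
    unfolding F_def legendre_exp_sum_def by (simp add: Legendre_mult sum_distrib_left mult.assoc)
  then have "of_int (Legendre d p) * legendre_exp_sum p 1
      = of_int (Legendre d p * Legendre d p) * legendre_exp_sum p d"
    by (simp add: mult.assoc)
  then show ?thesis
    using Legendre_mult_self[OF assms] by simp
qed

lemma quad_exp_sum_prime_unit:
  assumes "\<not> p dvd b"
  shows "quad_exp_sum p b 0 = of_int (Legendre b p) * quad_exp_sum p 1 0"
proof -
  have "\<not> p dvd 1"
    using p_gt_2 by auto
  then show ?thesis
    using legendre_exp_sum_eq[of b] legendre_exp_sum_eq[of 1] legendre_exp_sum_unit[OF assms] assms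
    by simp
qed

lemma norm_quad_exp_sum_prime:
  assumes "\<not> p dvd b"
  shows "cmod (quad_exp_sum p b 0) = sqrt (of_int p)"
  using assms prime p_gt_2 prime_imp_coprime coprime_commute prime_odd_int
  by (intro norm_quad_exp_sum_odd p_pos) blast+

lemma norm_legendre_exp_sum_le: "cmod (legendre_exp_sum p d) \<le> sqrt (of_int p)"
proof (cases "p dvd d")
  case True
  then have "e (of_int (d * x^2 + 0 * x) / of_int p) = 1" for x
    using e_frac_eq_1_iff[OF p_pos, of "d * x^2 + 0 * x"] by simp
  then have "legendre_exp_sum p d = 0"
    using legendre_exp_sum_eq[of d] True p_pos unfolding quad_exp_sum_def by simp
  then show ?thesis
    using p_pos by simp
next
  case False
  then show ?thesis
    using legendre_exp_sum_eq[of d] norm_quad_exp_sum_prime by simp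
qed

lemma legendre_exp_sum_units:
  "legendre_exp_sum p d
     = (\<Sum>t\<in>{a\<in>{0..<p}. coprime a p}. of_int (Legendre t p) * e (of_int (d * t) / of_int p))"
  unfolding legendre_exp_sum_def
proof (rule sum.mono_neutral_right)
  show "\<forall>t\<in>{0..<p} - {a\<in>{0..<p}. coprime a p}. of_int (Legendre t p) * e (of_int (d * t) / of_int p) = 0"
  proof
    fix t assume "t \<in> {0..<p} - {a\<in>{0..<p}. coprime a p}"
    then have "p dvd t"
      using prime prime_imp_coprime coprime_commute by auto
    then show "of_int (Legendre t p) * e (of_int (d * t) / of_int p) = 0"
      using Legendre_eq_0_iff by simp
  qed
qed auto

text \<open>The substitution \<open>a \<mapsto> a\<inverse>\<close> permutes the units and preserves \<open>(a/p)\<close>.\<close>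

lemma sum_units_Legendre_inv_mod:
  "(\<Sum>a\<in>{a\<in>{0..<p}. coprime a p}. of_int (Legendre a p) * e (of_int (inv_mod p a * d) / of_int p))
     = legendre_exp_sum p d"
proof -
  define U where "U = {a\<in>{0..<p}. coprime a p}"
  define j where "j a = inv_mod p a mod p" for a
  have j: "j a \<in> U" "j (j a) = a"
    "of_int (Legendre (j a) p) * e (of_int (d * j a) / of_int p)
       = of_int (Legendre a p) * e (of_int (inv_mod p a * d) / of_int p)"
    if "a \<in> U" for a
  proof -
    have a: "coprime a p" "0 \<le> a" "a < p"
      using that unfolding U_def by auto
    have "coprime (j a) p"
      unfolding j_def using coprime_inv_mod[OF a(1)] p_pos by (simp add: coprime_mod_left_iff)
    then show "j a \<in> U"
      unfolding U_def j_def using p_pos by simp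
    show "j (j a) = a"
      using inv_mod_inv_mod[OF p_pos a(1)] a unfolding j_def cong_def by simp
    have "Legendre (j a) p = Legendre a p"
      unfolding j_def using Legendre_cong[of "inv_mod p a mod p" "inv_mod p a" p] Legendre_inv_mod[OF a(1)]
      by (simp add: cong_def)
    moreover have "e (of_int (d * j a) / of_int p) = e (of_int (inv_mod p a * d) / of_int p)"
      unfolding j_def using p_pos by (intro e_frac_cong) (auto simp: cong_def mod_mult_right_eq mult.commute)
    ultimately show "of_int (Legendre (j a) p) * e (of_int (d * j a) / of_int p)
       = of_int (Legendre a p) * e (of_int (inv_mod p a * d) / of_int p)"
      by simp
  qed
  show ?thesis
    unfolding legendre_exp_sum_units U_def[symmetric]
    by (rule sum.reindex_bij_witness[where i = j and j = j]) (use j in auto)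
qed

section \<open>The sum \<open>T\<close> modulo an odd prime\<close>

text \<open>Complete the square (\<open>k\<close> inverts \<open>4 c\<close>) and use
  \<open>quad_exp_sum p (c * a) 0 = (c/p) (a/p) quad_exp_sum p 1 0\<close>.\<close>

lemma T_scaled_summand_prime:
  assumes c: "coprime c p" and a: "coprime a p" and k: "[4 * c * k = 1] (mod p)"
  shows "quad_exp_sum p (c * a) n1 * quad_exp_sum p (c * a) n2 * quad_exp_sum p (c * a) n3
           * e (of_int (inv_mod p a * m) / of_int p)
       = of_int (Legendre c p) * quad_exp_sum p 1 0 ^ 3
           * (of_int (Legendre a p) * e (of_int (inv_mod p a * (m - k * (n1^2 + n2^2 + n3^2))) / of_int p))"
proof -
  define a' where "a' = inv_mod p a"
  define s where "s = (of_int (Legendre c p * Legendre a p) :: complex)"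
  define G where "G = quad_exp_sum p 1 0"
  define E where "E x = e (of_int x / of_int p)" for x
  have "[(4 * c * k) * (a * a') = 1 * 1] (mod p)"
    unfolding a'_def using cong_mult[OF k inv_mod_correct[OF a]] .
  then have "[4 * (c * a) * (k * a') = 1] (mod p)"
    by (simp add: ac_simps)
  from quad_exp_sum_complete_square[OF p_pos this]
  have complete: "quad_exp_sum p (c * a) n = E (- (k * a' * n^2)) * quad_exp_sum p (c * a) 0" for n
    unfolding E_def .
  have "\<not> p dvd c * a"
    using coprime_imp_not_dvd c a by (simp add: coprime_mult_left_iff)
  then have "quad_exp_sum p (c * a) 0 = s * G"
    using quad_exp_sum_prime_unit[OF \<open>\<not> p dvd c * a\<close>] unfolding s_def G_def Legendre_mult by (simp only: of_int_mult)
  then have S: "quad_exp_sum p (c * a) n = E (- (k * a' * n^2)) * (s * G)" for n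
    unfolding complete[of n] by (rule arg_cong)
  have E_add: "E x * E y = E (x + y)" for x y
    unfolding E_def by (simp add: e_add add_divide_distrib)
  have E_sum: "E (- (k * a' * n1^2)) * E (- (k * a' * n2^2)) * E (- (k * a' * n3^2)) * E (a' * m)
      = E (a' * (m - k * (n1^2 + n2^2 + n3^2)))"
    unfolding E_add by (simp add: algebra_simps)
  have "s ^ 3 = s"
    unfolding s_def using Legendre_cases[of c p] Legendre_cases[of a p] by auto
  have "quad_exp_sum p (c * a) n1 * quad_exp_sum p (c * a) n2 * quad_exp_sum p (c * a) n3 * E (a' * m)
      = (E (- (k * a' * n1^2)) * E (- (k * a' * n2^2)) * E (- (k * a' * n3^2)) * E (a' * m)) * s ^ 3 * G ^ 3"
    unfolding S by (simp add: power3_eq_cube mult_ac)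
  also have "\<dots> = of_int (Legendre c p) * G ^ 3 * (of_int (Legendre a p) * E (a' * (m - k * (n1^2 + n2^2 + n3^2))))"
    unfolding E_sum \<open>s ^ 3 = s\<close> by (simp add: s_def mult_ac)
  finally show ?thesis
    unfolding a'_def E_def G_def .
qed

lemma T_scaled_prime_eq:
  assumes c: "coprime c p" and k: "[4 * c * k = 1] (mod p)"
  shows "T_scaled p c n1 n2 n3 m = of_int (Legendre c p) * quad_exp_sum p 1 0 ^ 3
           * legendre_exp_sum p (m - k * (n1^2 + n2^2 + n3^2))"
  unfolding T_scaled_def sum_units_Legendre_inv_mod[symmetric] sum_distrib_left
  by (rule sum.cong[OF refl], rule T_scaled_summand_prime[OF c _ k]) simp

lemma norm_T_scaled_odd_prime_le:
  assumes c: "coprime c p"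
  shows "cmod (T_scaled p c n1 n2 n3 m) \<le> (of_int p)^2"
proof -
  have "\<not> p dvd 4"
    using prime p_gt_2 prime_dvd_mult_iff[of p 2 2] zdvd_imp_le[of p 2] by auto
  then have "coprime 4 p"
    using prime_imp_coprime[OF prime] coprime_commute by blast
  then have "coprime (4 * c) p"
    using c by simp
  then obtain k where k: "[4 * c * k = 1] (mod p)"
    using inv_mod_correct by blast
  have "\<not> p dvd 1"
    using p_gt_2 by auto
  then have "cmod (T_scaled p c n1 n2 n3 m)
      = sqrt (of_int p) ^ 3 * cmod (legendre_exp_sum p (m - k * (n1^2 + n2^2 + n3^2)))"
    using Legendre_cases[of c p] Legendre_eq_0_iff[of c p] coprime_imp_not_dvd[OF c]
    by (auto simp: T_scaled_prime_eq[OF c k] norm_mult norm_power norm_quad_exp_sum_prime)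
  also have "\<dots> \<le> sqrt (of_int p) ^ 3 * sqrt (of_int p)"
    using p_pos by (intro mult_left_mono norm_legendre_exp_sum_le) simp
  also have "\<dots> = (of_int p)^2"
    using p_pos by (simp add: power2_eq_square power3_eq_cube ac_simps)
  finally show ?thesis .
qed

end

lemma norm_T_scaled_modulus_2:
  assumes "coprime c 2"
  shows "cmod (T_scaled 2 c n1 n2 n3 m) \<le> 8"
proof -
  have "{0..<2::int} = {0, 1}"
    by auto
  then have "{a\<in>{0..<2::int}. coprime a 2} = {1}"
    by auto
  then show ?thesis
    using norm_T_scaled_le[of 2 c n1 n2 n3 m] assms by (simp add: power3_eq_cube)
qed

lemma norm_T_scaled_prime_le:
  fixes p :: nat
  assumes p: "prime p" and c: "coprime c (int p)"
  shows "cmod (T_scaled (int p) c n1 n2 n3 m) \<le> (if p = 2 then 2 else 1) * (real p)^2"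
proof (cases "p = 2")
  case True
  then show ?thesis
    using norm_T_scaled_modulus_2 c by simp
next
  case False
  then have "int p > 2"
    using prime_ge_2_nat[OF p] by simp
  then show ?thesis
    using norm_T_scaled_odd_prime_le[of "int p" c] p c False by simp
qed

lemma norm_T_scaled_le_trivial:
  assumes q: "q > 0" and c: "coprime c q"
  shows "cmod (T_scaled q c n1 n2 n3 m) \<le> (if even q then 2 * sqrt 2 else 1) * (of_int q)^2 * sqrt (of_int q)"
proof -
  have cube: "sqrt y ^ 3 = y * sqrt y" if "y \<ge> 0" for y
    using that by (simp add: power3_eq_cube)
  have "card {a\<in>{0..<q}. coprime a q} \<le> card {0..<q}"
    by (rule card_mono) auto
  then have "real (card {a\<in>{0..<q}. coprime a q}) \<le> of_int q"
    using q by simp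
  then have "cmod (T_scaled q c n1 n2 n3 m) \<le> of_int q * sqrt ((if even q then 2 else 1) * of_int q) ^ 3"
    by (rule order_trans[OF norm_T_scaled_le[OF q c] mult_right_mono]) (use q in simp)
  also have "\<dots> = of_int q * ((if even q then 2 else 1) * of_int q * sqrt ((if even q then 2 else 1) * of_int q))"
    using q by (subst cube) simp_all
  also have "\<dots> = (if even q then 2 * sqrt 2 else 1) * (of_int q)^2 * sqrt (of_int q)"
    using q by (simp add: real_sqrt_mult power2_eq_square)
  finally show ?thesis .
qed

section \<open>Square-free moduli\<close>

lemma squarefree_prime_factor_split:
  fixes n :: nat
  assumes "squarefree n" "n \<noteq> 1"
  obtains p n' where "prime p" "n = p * n'" "coprime p n'" "squarefree n'"
proof -
  obtain p where p: "prime p" "p dvd n"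
    using prime_factor_nat[OF assms(2)] by blast
  then obtain n' where n': "n = p * n'"
    by (auto simp: dvd_def)
  have "\<not> p dvd n'"
  proof
    assume "p dvd n'"
    then have "p * p dvd n"
      using n' by simp
    then show False
      using assms(1) p(1) unfolding squarefree_def by (metis not_prime_unit power2_eq_square)
  qed
  then show ?thesis
    using that[OF p(1) n' prime_imp_coprime[OF p(1)]] squarefree_mono[of n' n] assms(1) n' by simp
qed

lemma norm_T_scaled_squarefree_le:
  fixes n :: nat
  assumes "squarefree n" "coprime c (int n)"
  shows "cmod (T_scaled (int n) c n1 n2 n3 m) \<le> (if even n then 2 else 1) * (real n)^2"
  using assms
proof (induction n arbitrary: c n1 n2 n3 m rule: less_induct)
  case (less n)
  show ?case
  proof (cases "n = 1")
    case True
    then show ?thesis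
      by (simp add: T_scaled_modulus_1)
  next
    case False
    then obtain p n' where p: "prime p" and n: "n = p * n'" and cop: "coprime p n'"
      and sq: "squarefree n'"
      using squarefree_prime_factor_split less.prems(1) by blast
    have "n \<noteq> 0"
      using less.prems(1) by (cases "n = 0") auto
    then have "n' > 0"
      using n by simp
    then have "n' < n"
      using n prime_gt_1_nat[OF p] by simp
    have pos: "int p > 0" "int n' > 0" and "coprime (int p) (int n')"
      using prime_gt_0_nat[OF p] \<open>n' > 0\<close> cop by auto
    then obtain r1 r2 where r: "r1 * int n' + r2 * int p = 1"
      using bezout_coprime_int by blast
    have "coprime (r1 * c) (int p)" "coprime (r2 * c) (int n')"
      using coprime_bezout_coeffs[OF r] less.prems(2) unfolding n
      by (simp_all add: coprime_mult_left_iff coprime_mult_right_iff)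
    then have "cmod (T_scaled (int n) c n1 n2 n3 m)
        \<le> ((if p = 2 then 2 else 1) * (real p)^2) * ((if even n' then 2 else 1) * (real n')^2)"
      unfolding n of_nat_mult T_scaled_crt[OF pos \<open>coprime (int p) (int n')\<close> r] norm_mult
      by (intro mult_mono norm_T_scaled_prime_le[OF p] less.IH[OF \<open>n' < n\<close> sq]) (auto simp: n)
    also have "\<dots> \<le> (if even n then 2 else 1) * (real n)^2"
      using cop p n prime_nat_iff[of p] by (auto simp: power2_eq_square)
    finally show ?thesis .
  qed
qed

theorem lemma3p8:
  fixes q1 q2 :: nat and n1 n2 n3 m :: int
  assumes "q1 \<ge> 1" "q2 \<ge> 1" "coprime q1 q2" "squarefree q1" "squarefull q2"
  shows "cmod (T (int (q1 * q2)) n1 n2 n3 m)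
           \<le> 4 * real q1 ^ 2 * real q2 powr (5/2)"
proof -
  have pos: "int q1 > 0" "int q2 > 0" and cop: "coprime (int q1) (int q2)"
    using assms by auto
  obtain r1 r2 where r: "r1 * int q2 + r2 * int q1 = 1"
    using bezout_coprime_int[OF cop] .
  have T: "T (int (q1 * q2)) n1 n2 n3 m = T_scaled (int q1) r1 (r1 * n1) (r1 * n2) (r1 * n3) (r1 * m)
        * T_scaled (int q2) r2 (r2 * n1) (r2 * n2) (r2 * n3) (r2 * m)"
    using T_eq_T_scaled[of "int q1 * int q2"] T_scaled_crt[OF pos cop r, of 1] pos by simp
  from coprime_bezout_coeffs[OF r] have "cmod (T_scaled (int q1) r1 (r1 * n1) (r1 * n2) (r1 * n3) (r1 * m))
        \<le> (if even q1 then 2 else 1) * (real q1)^2"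
      "cmod (T_scaled (int q2) r2 (r2 * n1) (r2 * n2) (r2 * n3) (r2 * m))
        \<le> (if even q2 then 2 * sqrt 2 else 1) * (real q2)^2 * sqrt (real q2)"
    using norm_T_scaled_squarefree_le[OF assms(4)] norm_T_scaled_le_trivial[OF pos(2)] by simp_all
  then have "cmod (T (int (q1 * q2)) n1 n2 n3 m)
      \<le> ((if even q1 then 2 else 1) * (real q1)^2)
        * ((if even q2 then 2 * sqrt 2 else 1) * (real q2)^2 * sqrt (real q2))"
    unfolding T norm_mult by (intro mult_mono) auto
  also have "\<dots> = ((if even q1 then 2 else 1) * (if even q2 then 2 * sqrt 2 else 1))
      * ((real q1)^2 * ((real q2)^2 * sqrt (real q2)))"
    by (simp add: mult_ac)
  also have "\<dots> \<le> 4 * ((real q1)^2 * ((real q2)^2 * sqrt (real q2)))"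
    using assms(3) coprime_common_divisor[of q1 q2 2] sqrt2_less_2 by (intro mult_right_mono) auto
  also have "(real q2)^2 * sqrt (real q2) = real q2 powr (5/2)"
    using powr_add[of "real q2" 2 "1/2"] by (simp add: powr_half_sqrt)
  finally show ?thesis
    by (simp add: mult.assoc)
qed

end
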